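(* Let $P$ be a positive event pattern and $I$ an event stream, and let $G=(V,\mathcal{E})$ be the GRETA graph of $P$ and $I$. Call a vertex a START vertex if its type is $start(P)$ and an END vertex if its type is $end(P)$. Then the set of event sequences $(v_0,v_1,\dots,v_m)$ ($m \ge 0$) that form directed paths in $G$ from a START vertex $v_0$ to an END vertex $v_m$ is equal to the set of event trends matched by $P$ in $I$; that is, for each such path there is a trend consisting of the same events in the same order, and vice versa.
   Context: Events: each event $e$ has an event type $e.type$ and an occurrence time $e.time \in \mathbb{Q}_{\ge 0}$. An event stream $I$ is a finite collection of distinct events arriving in nondecreasing order of time. Positive patterns: an event type $E$ is a pattern; if $P_i,P_j$ are patterns then $P_i+$ and $\mathsf{SEQ}(P_i,P_j)$ are patterns; each event type occurs at most once in a pattern. Matches over $I$: $matches(E)=\{(e): e\in I, e.type=E\}$; $(e_1,\dots,e_k)\in matches(\mathsf{SEQ}(P_i,P_j))$ iff for some $1\le m\le k$, $(e_1,\dots,e_m)\in matches(P_i)$, $(e_{m+1},\dots,e_k)\in matches(P_j)$ and $e_1.time<e_2.time<\dots<e_k.time$; $matches(P_i+)$ consists of concatenations $s_1\cdots s_k$ ($k\ge1$) with each $s_l\in matches(P_i)$ and the last event of $s_l$ strictly earlier than the first event of $s_{l+1}$. The event trends matched by $P$ in $I$ are the elements of $matches(P)$. Define $start(E)=end(E)=E$, $start(P_i+)=start(P_i)$, $end(P_i+)=end(P_i)$, $start(\mathsf{SEQ}(P_i,P_j))=start(P_i)$, $end(\mathsf{SEQ}(P_i,P_j))=end(P_j)$.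 The GRETA graph $G=(V,\mathcal{E})$ of $P$ and $I$ is the directed graph whose vertices are the events of $I$ that occur in at least one trend matched by $P$ in $I$, with an edge $(e_i,e_j)$ iff $e_i$ and $e_j$ are consecutive (adjacent) events, in this order, in some trend matched by $P$ in $I$. A path may consist of a single vertex. *)

theory Defs
  imports Main "HOL.Rat"
begin

text \<open>Events are abstract elements of type 'e; each event has a type (etype) and an
 occurrence time (etime). An event stream is a finite set of (distinct) events.
 A trend is represented by the list of its events.\<close>

datatype 't pattern = Ev 't | Plus "'t pattern" | Seq "'t pattern" "'t pattern"

fun types :: "'t pattern \<Rightarrow> 't list" where
  "types (Ev E) = [E]"
| "types (Plus P) = types P"
| "types (Seq P Q) = types P @ types Q"

text \<open>Positive pattern: each event type occurs at most once.\<close>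
definition wf_pattern :: "'t pattern \<Rightarrow> bool" where
  "wf_pattern P \<longleftrightarrow> distinct (types P)"

fun start :: "'t pattern \<Rightarrow> 't" where
  "start (Ev E) = E"
| "start (Plus P) = start P"
| "start (Seq P Q) = start P"

fun "end" :: "'t pattern \<Rightarrow> 't" where
  "end (Ev E) = E"
| "end (Plus P) = end P"
| "end (Seq P Q) = end Q"

fun matches :: "('e \<Rightarrow> 't) \<Rightarrow> ('e \<Rightarrow> rat) \<Rightarrow> 'e set \<Rightarrow> 't pattern \<Rightarrow> 'e list set" where
  "matches ty tm I (Ev E) = {[e] | e. e \<in> I \<and> ty e = E}"
| "matches ty tm I (Seq P Q) =
     {s1 @ s2 | s1 s2. s1 \<in> matches ty tm I P \<and> s2 \<in> matches ty tm I Q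
        \<and> sorted_wrt (<) (map tm (s1 @ s2))}"
| "matches ty tm I (Plus P) =
     {concat ss | ss. ss \<noteq> [] \<and> (\<forall>s \<in> set ss. s \<in> matches ty tm I P)
        \<and> (\<forall>l. Suc l < length ss \<longrightarrow> tm (last (ss ! l)) < tm (hd (ss ! Suc l)))}"

definition greta_V :: "('e \<Rightarrow> 't) \<Rightarrow> ('e \<Rightarrow> rat) \<Rightarrow> 'e set \<Rightarrow> 't pattern \<Rightarrow> 'e set" where
  "greta_V ty tm I P = {e. \<exists>tr \<in> matches ty tm I P. e \<in> set tr}"

definition greta_E :: "('e \<Rightarrow> 't) \<Rightarrow> ('e \<Rightarrow> rat) \<Rightarrow> 'e set \<Rightarrow> 't pattern \<Rightarrow> ('e \<times> 'e) set" where
  "greta_E ty tm I P = {(a, b). \<exists>tr \<in> matches ty tm I P. \<exists>i. Suc i < length tr \<and> tr ! i = a \<and> tr ! Suc i = b}"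

definition is_path :: "'e set \<Rightarrow> ('e \<times> 'e) set \<Rightarrow> 'e list \<Rightarrow> bool" where
  "is_path V E vs \<longleftrightarrow> vs \<noteq> [] \<and> set vs \<subseteq> V \<and>
     (\<forall>i. Suc i < length vs \<longrightarrow> (vs ! i, vs ! Suc i) \<in> E)"

end

theory Submission
  imports Defs
begin

text \<open>A list of events is a trend of a positive pattern P exactly when it satisfies local
  conditions: it is nonempty, its first event has type start P and its last one type end P, and
  any two consecutive events have increasing times and a pair of types that may be adjacent in
  P (the end of a subpattern followed by the start of the next one, or the end of an iterated
  subpattern followed by its start). Since every type occurs at most once in P, such a list
  can be cut into trends of the subpatterns: for SEQ(P, Q) at the first event whose type
  belongs to Q, for P+ at every step that is not a step inside P. An edge of the GRETA graph
  joins two consecutive events of some trend, so it satisfies the local step condition, and a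
  path from a START to an END vertex is therefore a trend; conversely every trend is such a
  path.\<close>

lemma successively_propagate:
  assumes "successively R xs" "Q (hd xs)" "\<And>a b. R a b \<Longrightarrow> Q a \<Longrightarrow> Q b"
  shows "\<forall>x\<in>set xs. Q x"
  using assms(1,2) by (induction xs rule: induct_list012) (auto intro: assms(3))

lemma successively_concat_iff:
  assumes "[] \<notin> set ss"
  shows "successively R (concat ss) \<longleftrightarrow>
    (\<forall>s\<in>set ss. successively R s) \<and> successively (\<lambda>s t. R (last s) (hd t)) ss"
  using assms by (induction ss rule: induct_list012) (auto simp: successively_append_iff hd_append)

lemma successively_split_blocks:
  assumes "successively (\<lambda>a b. R a b \<or> J a b) xs"
  shows "\<exists>ss. concat ss = xs \<and> [] \<notin> set ss \<and> (\<forall>s\<in>set ss. successively R s)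
    \<and> successively (\<lambda>s t. J (last s) (hd t)) ss"
  using assms
proof (induction xs rule: induct_list012)
  case 1
  show ?case by (intro exI[of _ "[]"]) simp
next
  case (2 x)
  show ?case by (intro exI[of _ "[[x]]"]) simp
next
  case (3 x y zs)
  then obtain ss where ss: "concat ss = y # zs" "[] \<notin> set ss" "\<forall>s\<in>set ss. successively R s"
    "successively (\<lambda>s t. J (last s) (hd t)) ss"
    by auto
  then obtain s ss' where s: "ss = s # ss'" "s \<noteq> []" "hd s = y"
    by (cases ss) (auto simp: append_eq_Cons_conv)
  from "3.prems" consider "R x y" | "J x y" by auto
  then show ?case
  proof cases
    case 1
    have "successively R (x # s)"
      using 1 s ss(3) by (simp add: successively_Cons)
    moreover have "successively (\<lambda>s t. J (last s) (hd t)) ((x # s) # ss')"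
      using ss(4) s by (simp add: successively_Cons)
    ultimately show ?thesis
      using ss s by (intro exI[of _ "(x # s) # ss'"]) auto
  next
    case 2
    have "successively (\<lambda>s t. J (last s) (hd t)) ([x] # ss)"
      using 2 ss(4) s by (simp add: successively_Cons)
    then show ?thesis
      using ss by (intro exI[of _ "[x] # ss"]) auto
  qed
qed

lemma successively_links_endpoints:
  assumes "successively (\<lambda>s t. E (last s) \<and> S (hd t)) ss" "S (hd (hd ss))" "E (last (last ss))"
  shows "\<forall>s\<in>set ss. S (hd s) \<and> E (last s)"
  using assms
proof (induction ss rule: induct_list012)
  case (3 s t rest)
  have "E (last s)" "S (hd t)" "successively (\<lambda>s t. E (last s) \<and> S (hd t)) (t # rest)"
    using "3.prems"(1) by simp_all
  moreover have "E (last (last (t # rest)))"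
    using "3.prems"(3) by simp
  ultimately have "\<forall>s\<in>set (t # rest). S (hd s) \<and> E (last s)"
    by (intro "3.IH"(2)) simp_all
  then show ?case
    using \<open>E (last s)\<close> "3.prems"(2) by simp
qed simp_all

lemma hd_concat_nonempty: "[] \<notin> set ss \<Longrightarrow> ss \<noteq> [] \<Longrightarrow> hd (concat ss) = hd (hd ss)"
  by (cases ss) auto

lemma last_concat_nonempty: "[] \<notin> set ss \<Longrightarrow> ss \<noteq> [] \<Longrightarrow> last (concat ss) = last (last ss)"
  by (induction ss rule: induct_list012) (auto simp: last_append)

lemma sorted_wrt_less_map_iff:
  fixes f :: "'a \<Rightarrow> 'b::order"
  shows "sorted_wrt (<) (map f xs) \<longleftrightarrow> successively (\<lambda>a b. f a < f b) xs"
  by (simp add: successively_conv_sorted_wrt[symmetric] successively_map)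

fun follow :: "'t pattern \<Rightarrow> ('t \<times> 't) set" where
  "follow (Ev E) = {}"
| "follow (Plus P) = follow P \<union> {(end P, start P)}"
| "follow (Seq P Q) = follow P \<union> follow Q \<union> {(end P, start Q)}"

lemma start_in_types: "start P \<in> set (types P)"
  by (induction P) auto

lemma end_in_types: "end P \<in> set (types P)"
  by (induction P) auto

lemma follow_subset_types: "follow P \<subseteq> set (types P) \<times> set (types P)"
  using start_in_types end_in_types by (induction P) fastforce+

definition trend_step ::
    "('e \<Rightarrow> 't) \<Rightarrow> ('e \<Rightarrow> rat) \<Rightarrow> ('t \<times> 't) set \<Rightarrow> 'e \<Rightarrow> 'e \<Rightarrow> bool" where
  "trend_step ty tm F a b \<longleftrightarrow> tm a < tm b \<and> (ty a, ty b) \<in> F"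

definition local_trend ::
    "('e \<Rightarrow> 't) \<Rightarrow> ('e \<Rightarrow> rat) \<Rightarrow> 'e set \<Rightarrow> 't pattern \<Rightarrow> 'e list \<Rightarrow> bool" where
  "local_trend ty tm I P xs \<longleftrightarrow> xs \<noteq> [] \<and> set xs \<subseteq> I \<and>
     successively (trend_step ty tm (follow P)) xs \<and> ty (hd xs) = start P \<and> ty (last xs) = end P"

lemma local_trend_Ev_iff:
  "local_trend ty tm I (Ev E) xs \<longleftrightarrow> (\<exists>e. xs = [e] \<and> e \<in> I \<and> ty e = E)"
  by (cases xs rule: remdups_adj.cases) (auto simp: local_trend_def trend_step_def)

lemma trend_step_SeqE:
  assumes "set (types P) \<inter> set (types Q) = {}" "trend_step ty tm (follow (Seq P Q)) a b"
  obtains "trend_step ty tm (follow P) a b" "ty a \<notin> set (types Q)" "ty b \<notin> set (types Q)"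
  | "ty a = end P" "ty b = start Q" "ty a \<notin> set (types Q)" "ty b \<in> set (types Q)"
  | "trend_step ty tm (follow Q) a b" "ty a \<in> set (types Q)" "ty b \<in> set (types Q)"
  using assms follow_subset_types[of P] follow_subset_types[of Q] end_in_types[of P]
    start_in_types[of Q] by (auto simp: trend_step_def)

lemma successively_trend_step_mono:
  "successively (trend_step ty tm F) xs \<Longrightarrow> F \<subseteq> G \<Longrightarrow> successively (trend_step ty tm G) xs"
  by (erule successively_mono) (auto simp: trend_step_def)

lemma successively_trend_step_less:
  "successively (trend_step ty tm F) xs \<Longrightarrow> successively (\<lambda>a b. tm a < tm b) xs"
  by (erule successively_mono) (simp add: trend_step_def)

lemma local_trend_Seq_split:
  assumes disj: "set (types P) \<inter> set (types Q) = {}"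
    and L: "local_trend ty tm I (Seq P Q) xs"
  obtains s1 s2 where "xs = s1 @ s2" "local_trend ty tm I P s1" "local_trend ty tm I Q s2"
proof -
  let ?inQ = "\<lambda>e. ty e \<in> set (types Q)"
  define s1 s2
    where "s1 = takeWhile (\<lambda>e. \<not> ?inQ e) xs" and "s2 = dropWhile (\<lambda>e. \<not> ?inQ e) xs"
  have xs: "xs = s1 @ s2"
    by (simp add: s1_def s2_def)
  have steps: "successively (trend_step ty tm (follow (Seq P Q))) xs"
    using L by (simp add: local_trend_def)
  have "?inQ (last xs)"
    using L end_in_types[of Q] by (simp add: local_trend_def)
  then have "s2 \<noteq> []"
    using L last_in_set by (fastforce simp: s2_def local_trend_def)
  have "\<not> ?inQ (hd xs)"
    using L disj start_in_types[of P] by (auto simp: local_trend_def)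
  then have "s1 \<noteq> []"
    using L by (auto simp: s1_def local_trend_def takeWhile_eq_Nil_iff)
  have s1_notQ: "\<forall>e\<in>set s1. \<not> ?inQ e"
    by (auto simp: s1_def dest: set_takeWhileD)
  have "?inQ (hd s2)"
    using hd_dropWhile[of "\<lambda>e. \<not> ?inQ e" xs] \<open>s2 \<noteq> []\<close> by (simp add: s2_def)
  have steps1: "successively (trend_step ty tm (follow (Seq P Q))) s1"
    and steps2: "successively (trend_step ty tm (follow (Seq P Q))) s2"
    and junction: "trend_step ty tm (follow (Seq P Q)) (last s1) (hd s2)"
    using steps \<open>s1 \<noteq> []\<close> \<open>s2 \<noteq> []\<close> by (simp_all add: xs successively_append_iff)
  have s2_Q: "\<forall>e\<in>set s2. ?inQ e"
    \<comment> \<open>by disjointness, no step leaves the types of Q\<close>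
    using steps2 \<open>?inQ (hd s2)\<close>
    by (rule successively_propagate) (erule trend_step_SeqE[OF disj]; simp)
  have "successively (trend_step ty tm (follow P)) s1"
    using steps1
    by (rule successively_mono) (erule trend_step_SeqE[OF disj]; use s1_notQ in auto)
  moreover have "successively (trend_step ty tm (follow Q)) s2"
    using steps2
    by (rule successively_mono) (erule trend_step_SeqE[OF disj]; use s2_Q in auto)
  moreover have "ty (last s1) = end P \<and> ty (hd s2) = start Q"
    using junction by (rule trend_step_SeqE[OF disj])
      (use s1_notQ \<open>s1 \<noteq> []\<close> \<open>?inQ (hd s2)\<close> in auto)
  ultimately show thesis
    using that xs L \<open>s1 \<noteq> []\<close> \<open>s2 \<noteq> []\<close> by (auto simp: local_trend_def)
qed

lemma local_trend_Seq_iff: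
  assumes "set (types P) \<inter> set (types Q) = {}"
  shows "local_trend ty tm I (Seq P Q) xs \<longleftrightarrow>
    (\<exists>s1 s2. xs = s1 @ s2 \<and> local_trend ty tm I P s1 \<and> local_trend ty tm I Q s2
       \<and> sorted_wrt (<) (map tm xs))"
proof
  assume L: "local_trend ty tm I (Seq P Q) xs"
  then have "sorted_wrt (<) (map tm xs)"
    unfolding local_trend_def sorted_wrt_less_map_iff
    by (blast intro: successively_trend_step_less)
  with local_trend_Seq_split[OF assms L]
  show "\<exists>s1 s2. xs = s1 @ s2 \<and> local_trend ty tm I P s1 \<and> local_trend ty tm I Q s2
       \<and> sorted_wrt (<) (map tm xs)"
    by blast
next
  assume "\<exists>s1 s2. xs = s1 @ s2 \<and> local_trend ty tm I P s1 \<and> local_trend ty tm I Q s2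
       \<and> sorted_wrt (<) (map tm xs)"
  then obtain s1 s2 where xs: "xs = s1 @ s2" and L1: "local_trend ty tm I P s1"
    and L2: "local_trend ty tm I Q s2" and sorted: "successively (\<lambda>a b. tm a < tm b) xs"
    by (auto simp: sorted_wrt_less_map_iff)
  have "successively (trend_step ty tm (follow (Seq P Q))) s1"
    using L1 unfolding local_trend_def by (auto intro: successively_trend_step_mono)
  moreover have "successively (trend_step ty tm (follow (Seq P Q))) s2"
    using L2 unfolding local_trend_def by (auto intro: successively_trend_step_mono)
  moreover have "trend_step ty tm (follow (Seq P Q)) (last s1) (hd s2)"
    using sorted L1 L2 by (auto simp: xs local_trend_def trend_step_def successively_append_iff)
  ultimately show "local_trend ty tm I (Seq P Q) xs"
    using L1 L2 by (auto simp: xs local_trend_def successively_append_iff)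
qed

lemma local_trend_Plus_split:
  assumes L: "local_trend ty tm I (Plus P) xs"
  obtains ss where "xs = concat ss" "ss \<noteq> []" "\<forall>s\<in>set ss. local_trend ty tm I P s"
    "successively (\<lambda>s t. tm (last s) < tm (hd t)) ss"
proof -
  have "successively (trend_step ty tm (follow (Plus P))) xs"
    using L by (simp add: local_trend_def)
  then have "successively (\<lambda>a b. trend_step ty tm (follow P) a b
      \<or> tm a < tm b \<and> ty a = end P \<and> ty b = start P) xs"
    by (rule successively_mono) (auto simp: trend_step_def)
  from successively_split_blocks[OF this]
  obtain ss where xs: "concat ss = xs" and nonempty: "[] \<notin> set ss"
    and blocks: "\<forall>s\<in>set ss. successively (trend_step ty tm (follow P)) s"
    and links: "successively
      (\<lambda>s t. tm (last s) < tm (hd t) \<and> ty (last s) = end P \<and> ty (hd t) = start P) ss"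
    by blast
  have "ss \<noteq> []"
    using L xs by (auto simp: local_trend_def)
  have "successively (\<lambda>s t. ty (last s) = end P \<and> ty (hd t) = start P) ss"
    using links by (rule successively_mono) simp
  moreover have "hd xs = hd (hd ss)" "last xs = last (last ss)"
    using nonempty \<open>ss \<noteq> []\<close> unfolding xs[symmetric]
    by (simp_all add: hd_concat_nonempty last_concat_nonempty)
  ultimately have "\<forall>s\<in>set ss. ty (hd s) = start P \<and> ty (last s) = end P"
    using L by (intro successively_links_endpoints) (auto simp: local_trend_def)
  then have "\<forall>s\<in>set ss. local_trend ty tm I P s"
    using blocks nonempty L xs by (fastforce simp: local_trend_def)
  moreover have "successively (\<lambda>s t. tm (last s) < tm (hd t)) ss"
    using links by (rule successively_mono) simp
  ultimately show thesis
    using that xs \<open>ss \<noteq> []\<close> by blast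
qed

lemma local_trend_Plus_iff:
  "local_trend ty tm I (Plus P) xs \<longleftrightarrow>
    (\<exists>ss. xs = concat ss \<and> ss \<noteq> [] \<and> (\<forall>s\<in>set ss. local_trend ty tm I P s)
       \<and> successively (\<lambda>s t. tm (last s) < tm (hd t)) ss)"
proof
  assume "local_trend ty tm I (Plus P) xs"
  then show "\<exists>ss. xs = concat ss \<and> ss \<noteq> [] \<and> (\<forall>s\<in>set ss. local_trend ty tm I P s)
       \<and> successively (\<lambda>s t. tm (last s) < tm (hd t)) ss"
    by (elim local_trend_Plus_split) blast
next
  assume "\<exists>ss. xs = concat ss \<and> ss \<noteq> [] \<and> (\<forall>s\<in>set ss. local_trend ty tm I P s)
       \<and> successively (\<lambda>s t. tm (last s) < tm (hd t)) ss"
  then obtain ss where xs: "xs = concat ss" and "ss \<noteq> []"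
    and blocks: "\<forall>s\<in>set ss. local_trend ty tm I P s"
    and links: "successively (\<lambda>s t. tm (last s) < tm (hd t)) ss"
    by blast
  have nonempty: "[] \<notin> set ss"
    using blocks by (auto simp: local_trend_def)
  have "successively (trend_step ty tm (follow (Plus P))) xs"
    unfolding xs successively_concat_iff[OF nonempty]
  proof
    show "\<forall>s\<in>set ss. successively (trend_step ty tm (follow (Plus P))) s"
      using blocks by (auto simp: local_trend_def intro: successively_trend_step_mono)
    show "successively (\<lambda>s t. trend_step ty tm (follow (Plus P)) (last s) (hd t)) ss"
      using links by (rule successively_mono)
        (use blocks in \<open>auto simp: local_trend_def trend_step_def\<close>)
  qed
  moreover have "hd xs = hd (hd ss)" "last xs = last (last ss)"
    using nonempty \<open>ss \<noteq> []\<close> unfolding xs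
    by (simp_all add: hd_concat_nonempty last_concat_nonempty)
  ultimately show "local_trend ty tm I (Plus P) xs"
    using blocks \<open>ss \<noteq> []\<close> by (auto simp: xs local_trend_def)
qed

lemma matches_eq_local_trend:
  assumes "wf_pattern P"
  shows "matches ty tm I P = {xs. local_trend ty tm I P xs}"
  using assms
proof (induction P)
  case (Ev E)
  show ?case
    by (auto simp: local_trend_Ev_iff)
next
  case (Plus P)
  then have "matches ty tm I P = {xs. local_trend ty tm I P xs}"
    by (simp add: wf_pattern_def)
  then show ?case
    by (auto simp: local_trend_Plus_iff successively_conv_nth)
next
  case (Seq P Q)
  then have "matches ty tm I P = {xs. local_trend ty tm I P xs}"
    and "matches ty tm I Q = {xs. local_trend ty tm I Q xs}"
    and "set (types P) \<inter> set (types Q) = {}"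
    by (simp_all add: wf_pattern_def)
  then show ?case
    by (auto simp: local_trend_Seq_iff)
qed

lemma greta_V_subset:
  "wf_pattern P \<Longrightarrow> greta_V ty tm I P \<subseteq> I"
  by (auto simp: greta_V_def matches_eq_local_trend local_trend_def)

lemma greta_E_trend_step:
  assumes "wf_pattern P" "(a, b) \<in> greta_E ty tm I P"
  shows "trend_step ty tm (follow P) a b"
proof -
  from assms(2) obtain tr i where "tr \<in> matches ty tm I P" "Suc i < length tr"
    and "tr ! i = a" "tr ! Suc i = b"
    by (auto simp: greta_E_def)
  then show ?thesis
    using matches_eq_local_trend[OF assms(1), of ty tm I]
    by (auto simp: local_trend_def successively_conv_nth)
qed

lemma greta_path_iff_local_trend:
  assumes "wf_pattern P"
  shows "is_path (greta_V ty tm I P) (greta_E ty tm I P) vs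
      \<and> ty (hd vs) = start P \<and> ty (last vs) = end P
    \<longleftrightarrow> local_trend ty tm I P vs"
proof
  assume path: "is_path (greta_V ty tm I P) (greta_E ty tm I P) vs
      \<and> ty (hd vs) = start P \<and> ty (last vs) = end P"
  then have "successively (trend_step ty tm (follow P)) vs"
    using greta_E_trend_step[OF assms, where ty = ty and tm = tm and I = I]
    by (auto simp: is_path_def successively_conv_nth)
  then show "local_trend ty tm I P vs"
    using path greta_V_subset[OF assms, of ty tm I] by (auto simp: is_path_def local_trend_def)
next
  assume L: "local_trend ty tm I P vs"
  then have "vs \<in> matches ty tm I P"
    using matches_eq_local_trend[OF assms] by blast
  with L show "is_path (greta_V ty tm I P) (greta_E ty tm I P) vs
      \<and> ty (hd vs) = start P \<and> ty (last vs) = end P"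
    unfolding is_path_def greta_V_def greta_E_def local_trend_def by blast
qed

theorem theorem2:
  fixes ty :: "'e \<Rightarrow> 't" and tm :: "'e \<Rightarrow> rat" and I :: "'e set" and P :: "'t pattern"
  assumes "wf_pattern P"
    and "finite I"
    and "\<forall>e \<in> I. tm e \<ge> 0"
  shows "{vs. is_path (greta_V ty tm I P) (greta_E ty tm I P) vs
              \<and> ty (hd vs) = start P \<and> ty (last vs) = end P}
         = matches ty tm I P"
  using greta_path_iff_local_trend[OF assms(1)] matches_eq_local_trend[OF assms(1)] by blast

end
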